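(* Let $S=S(c,r)\subset\mathbb{R}^{n+1}$ be the sphere of center $c$ and radius $r$, and let $\mathcal{V}=\{V_1,\dots,V_s\}$ be a finite collection of codimension-one affine subspaces of $\mathbb{R}^{n+1}$ all containing $c$. Let $x,y\in S$ with $\mathcal{V}_x=\mathcal{V}_y$ and $y\in S_\alpha(x)$, where $S_\alpha=S_\alpha(x)$ is the stratum of $x$. Then for every $\epsilon>0$ the stratifications $(\partial_{rel}F_\alpha(x,\epsilon),\mathcal{V}_x)$ and $(\partial_{rel}F_\alpha(y,\epsilon),\mathcal{V}_y)$ are isometric.
   Context: For $x\in S$, $\mathcal{V}_x$ is the set of $V_i\in\mathcal{V}$ containing $x$. For $\alpha\subset\{1,\dots,s\}$, $V_\alpha=\bigcap_{i\in\alpha}V_i$ (with $V_\emptyset=\mathbb{R}^{n+1}$) and $S_\alpha=S\cap V_\alpha$ (a great sphere). The stratum $S_\alpha(x)$ of $x$ is the lowest-dimensional $S_\alpha$ containing $x$ (namely $S\cap\bigcap_{V_i\in\mathcal{V}_x}V_i$). For $z\in S_\alpha$ and $\epsilon>0$, write $W_\alpha$ for the linear subspace orthogonal to the direction space of $V_\alpha$; the relative boundary of the spherical cap with top $z$ is $\partial_{rel}F_\alpha(z,\epsilon)=\{p\in S: p-c=t(z-c)+u,\ t>0,\ u\in W_\alpha,\ \|u\|=\epsilon\}$; it is a Euclidean sphere (possibly empty) whose center lies on the line $c+\mathbb{R}(z-c)\subset V_\alpha$. A pair $(\Sigma,\mathcal{W})$ of a Euclidean sphere $\Sigma$ and a finite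 collection $\mathcal{W}$ of affine hyperplanes is a stratification; here $\mathcal{V}_x$ induces the stratification of $\partial_{rel}F_\alpha(x,\epsilon)$ given by the intersections of this sphere with members of $\mathcal{V}_x$. Two stratifications $(\Sigma_1,\mathcal{W}_1)$, $(\Sigma_2,\mathcal{W}_2)$ are isometric if there is a bijection $j:\mathcal{W}_1\to\mathcal{W}_2$ and an orthogonal affine map $O$ with $O(\Sigma_1)=\Sigma_2$ and $O(\Sigma_1\cap W)=\Sigma_2\cap j(W)$ for every $W\in\mathcal{W}_1$. *)

theory Defs
  imports "HOL-Analysis.Analysis"
begin

definition affine_hyperplane :: "'a::euclidean_space set \<Rightarrow> bool" where
  "affine_hyperplane V \<longleftrightarrow> (\<exists>a b. a \<noteq> 0 \<and> V = {p. a \<bullet> p = b})"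

definition hyps_at :: "'a set set \<Rightarrow> 'a \<Rightarrow> 'a set set" where
  "hyps_at \<V> x = {V \<in> \<V>. x \<in> V}"

text \<open>S_alpha for a subfamily alpha (given as a set of hyperplanes); empty family gives S.\<close>
definition strat_piece :: "'a set \<Rightarrow> 'a set set \<Rightarrow> 'a set" where
  "strat_piece S \<alpha> = S \<inter> \<Inter>\<alpha>"

definition stratum :: "'a set \<Rightarrow> 'a set set \<Rightarrow> 'a \<Rightarrow> 'a set" where
  "stratum S \<V> x = strat_piece S (hyps_at \<V> x)"

text \<open>W_alpha: orthogonal complement of the direction space of V_alpha (V_alpha contains c).\<close>
definition W_space :: "'a::euclidean_space \<Rightarrow> 'a set set \<Rightarrow> 'a set" where
  "W_space c \<alpha> = orthogonal_comp ((\<lambda>q. q - c) ` \<Inter>\<alpha>)"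

text \<open>Relative boundary of the spherical cap with top z on the sphere S(c,r).\<close>
definition rel_bdry_cap :: "'a::euclidean_space \<Rightarrow> real \<Rightarrow> 'a set set \<Rightarrow> 'a \<Rightarrow> real \<Rightarrow> 'a set" where
  "rel_bdry_cap c r \<alpha> z \<epsilon> =
     {p \<in> sphere c r. \<exists>t>0. \<exists>u \<in> W_space c \<alpha>. norm u = \<epsilon> \<and> p - c = t *\<^sub>R (z - c) + u}"

definition orthogonal_affine :: "('a::euclidean_space \<Rightarrow> 'a) \<Rightarrow> bool" where
  "orthogonal_affine T \<longleftrightarrow> (\<exists>f b. orthogonal_transformation f \<and> T = (\<lambda>p. f p + b))"

definition isometric_strat :: "'a::euclidean_space set \<Rightarrow> 'a set set \<Rightarrow> 'a set \<Rightarrow> 'a set set \<Rightarrow> bool" where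
  "isometric_strat \<Sigma>1 \<W>1 \<Sigma>2 \<W>2 \<longleftrightarrow>
     (\<exists>j T. bij_betw j \<W>1 \<W>2 \<and> orthogonal_affine T \<and> T ` \<Sigma>1 = \<Sigma>2 \<and>
        (\<forall>W \<in> \<W>1. T ` (\<Sigma>1 \<inter> W) = \<Sigma>2 \<inter> j W))"

end

theory Submission
  imports Defs
begin

text \<open>
  The isometry is the reflection of the ambient space in the hyperplane through \<open>c\<close>
  orthogonal to \<open>x - y\<close>, i.e.\ the perpendicular bisector of \<open>x\<close> and \<open>y\<close> (it passes
  through \<open>c\<close> because \<open>x\<close> and \<open>y\<close> lie on the same sphere). It swaps \<open>x - c\<close> and \<open>y - c\<close>
  and fixes \<open>W\<^sub>\<alpha>\<close> pointwise, since \<open>W\<^sub>\<alpha>\<close> is orthogonal to both, so it carries the cap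
  boundary around \<open>x\<close> onto the one around \<open>y\<close>. The normal of every \<open>V \<in> \<V>\<^sub>x\<close> is
  orthogonal to \<open>x - y\<close>, as both points lie in \<open>V\<close>, so each such \<open>V\<close> is mapped onto itself.
\<close>

definition reflect_along :: "'a::real_inner \<Rightarrow> 'a \<Rightarrow> 'a" where
  "reflect_along w v = v - ((2 * (v \<bullet> w)) / (w \<bullet> w)) *\<^sub>R w"

lemma reflect_along_uminus: "reflect_along (- w) = reflect_along w"
  by (simp add: reflect_along_def fun_eq_iff)

lemma reflect_along_orthogonal: "u \<bullet> w = 0 \<Longrightarrow> reflect_along w u = u"
  by (simp add: reflect_along_def)

lemma inner_reflect_along_orthogonal: "a \<bullet> w = 0 \<Longrightarrow> a \<bullet> reflect_along w v = a \<bullet> v"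
  by (simp add: reflect_along_def inner_diff_right)

lemma reflect_along_reflect_along [simp]: "reflect_along w (reflect_along w v) = v"
proof (cases "w = 0")
  case False
  then have "reflect_along w v \<bullet> w = - (v \<bullet> w)"
    by (simp add: reflect_along_def inner_diff_left)
  then show ?thesis
    by (simp add: reflect_along_def[of w "reflect_along w v"]) (simp add: reflect_along_def)
qed (simp add: reflect_along_def)

lemma linear_reflect_along: "linear (reflect_along w)"
  by (rule linearI) (simp_all add: reflect_along_def inner_add_left add_divide_distrib
      algebra_simps scaleR_right_diff_distrib)

lemma inner_reflect_along: "reflect_along w v \<bullet> reflect_along w v' = v \<bullet> v'"
  by (cases "w = 0")
    (simp_all add: reflect_along_def inner_diff_left inner_diff_right field_simps inner_commute)

lemma orthogonal_transformation_reflect_along: "orthogonal_transformation (reflect_along w)"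
  unfolding orthogonal_transformation_def using linear_reflect_along inner_reflect_along by blast

lemma reflect_along_diff_swap:
  assumes "norm a = norm b"
  shows "reflect_along (a - b) a = b"
proof (cases "a = b")
  case False
  have "a \<bullet> a = b \<bullet> b"
    using assms by (simp add: dot_square_norm)
  then have "2 * (a \<bullet> (a - b)) = (a - b) \<bullet> (a - b)"
    by (simp add: inner_diff_left inner_diff_right inner_commute)
  then have coeff: "(2 * (a \<bullet> (a - b))) / ((a - b) \<bullet> (a - b)) = 1"
    using False by (metis divide_self inner_eq_zero_iff right_minus_eq)
  show ?thesis
    unfolding reflect_along_def coeff by simp
qed (simp add: reflect_along_def)

definition reflect_through :: "'a::real_inner \<Rightarrow> 'a \<Rightarrow> 'a \<Rightarrow> 'a" where
  "reflect_through c w p = c + reflect_along w (p - c)"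

lemma reflect_through_reflect_through [simp]: "reflect_through c w (reflect_through c w p) = p"
  by (simp add: reflect_through_def)

lemma reflect_through_uminus: "reflect_through c (- w) = reflect_through c w"
  by (simp add: reflect_through_def reflect_along_uminus fun_eq_iff)

lemma orthogonal_affine_reflect_through: "orthogonal_affine (reflect_through c w)"
  unfolding orthogonal_affine_def
proof (intro exI conjI)
  show "orthogonal_transformation (reflect_along w)"
    by (rule orthogonal_transformation_reflect_along)
  show "reflect_through c w = (\<lambda>p. reflect_along w p + (c - reflect_along w c))"
    by (simp add: reflect_through_def fun_eq_iff linear_diff[OF linear_reflect_along])
qed

lemma reflect_through_image_eq:
  assumes "\<And>p. p \<in> A \<Longrightarrow> reflect_through c (x - y) p \<in> B"
    and "\<And>p. p \<in> B \<Longrightarrow> reflect_through c (y - x) p \<in> A"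
  shows "reflect_through c (x - y) ` A = B"
proof
  show "reflect_through c (x - y) ` A \<subseteq> B"
    using assms(1) by blast
  show "B \<subseteq> reflect_through c (x - y) ` A"
  proof
    fix b assume "b \<in> B"
    then have "reflect_through c (x - y) b \<in> A"
      using assms(2) reflect_through_uminus[of c "x - y"] by simp
    then show "b \<in> reflect_through c (x - y) ` A"
      by (metis image_eqI reflect_through_reflect_through)
  qed
qed

lemma reflect_through_mem_hyperplane:
  assumes "affine_hyperplane V" and "c \<in> V" "x \<in> V" "y \<in> V" "p \<in> V"
  shows "reflect_through c (x - y) p \<in> V"
proof -
  obtain a b where V: "V = {q. a \<bullet> q = b}"
    using assms(1) unfolding affine_hyperplane_def by blast
  then have "a \<bullet> (x - y) = 0"
    using assms(3,4) by (simp add: inner_diff_right)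
  then have "a \<bullet> reflect_along (x - y) (p - c) = a \<bullet> (p - c)"
    by (rule inner_reflect_along_orthogonal)
  then show ?thesis
    using assms(2,5) V by (simp add: reflect_through_def inner_diff_right inner_add_right)
qed

lemma reflect_through_mem_rel_bdry_cap:
  assumes "x \<in> sphere c r" "y \<in> sphere c r" and "x \<in> \<Inter>\<alpha>" "y \<in> \<Inter>\<alpha>"
    and "p \<in> rel_bdry_cap c r \<alpha> x \<epsilon>"
  shows "reflect_through c (x - y) p \<in> rel_bdry_cap c r \<alpha> y \<epsilon>"
proof -
  obtain t u where "t > 0" and u: "u \<in> W_space c \<alpha>" "norm u = \<epsilon>"
    and p: "p \<in> sphere c r" "p - c = t *\<^sub>R (x - c) + u"
    using assms(5) unfolding rel_bdry_cap_def by blast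
  have "(x - c) \<bullet> u = 0" "(y - c) \<bullet> u = 0"
    using u(1) assms(3,4) unfolding W_space_def orthogonal_comp_def orthogonal_def by auto
  then have "u \<bullet> (x - y) = 0"
    by (simp add: inner_diff_left inner_diff_right inner_commute)
  then have fix_u: "reflect_along (x - y) u = u"
    by (rule reflect_along_orthogonal)
  have "reflect_along (x - y) (x - c) = y - c"
    using reflect_along_diff_swap[of "x - c" "y - c"] assms(1,2)
    by (simp add: dist_norm norm_minus_commute)
  then have image: "reflect_through c (x - y) p - c = t *\<^sub>R (y - c) + u"
    by (simp add: reflect_through_def p(2) fix_u linear_add[OF linear_reflect_along]
        linear_scale[OF linear_reflect_along])
  have "norm (reflect_along (x - y) (p - c)) = norm (p - c)"
    by (simp add: norm_eq_sqrt_inner inner_reflect_along)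
  then have "reflect_through c (x - y) p \<in> sphere c r"
    using p(1) by (simp add: reflect_through_def dist_norm norm_minus_commute)
  then show ?thesis
    unfolding rel_bdry_cap_def using \<open>t > 0\<close> u image by blast
qed

lemma isometric_strat_rel_bdry_cap:
  assumes "\<forall>V \<in> \<alpha>. affine_hyperplane V \<and> c \<in> V"
    and "x \<in> sphere c r" "y \<in> sphere c r" and "x \<in> \<Inter>\<alpha>" "y \<in> \<Inter>\<alpha>"
  shows "isometric_strat (rel_bdry_cap c r \<alpha> x \<epsilon>) \<alpha> (rel_bdry_cap c r \<alpha> y \<epsilon>) \<alpha>"
proof -
  let ?T = "reflect_through c (x - y)"
  have cap_image: "?T ` rel_bdry_cap c r \<alpha> x \<epsilon> = rel_bdry_cap c r \<alpha> y \<epsilon>"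
    by (intro reflect_through_image_eq reflect_through_mem_rel_bdry_cap assms(2-5))
  have slice_image: "?T ` (rel_bdry_cap c r \<alpha> x \<epsilon> \<inter> V) = rel_bdry_cap c r \<alpha> y \<epsilon> \<inter> V"
    if "V \<in> \<alpha>" for V
  proof -
    have V: "affine_hyperplane V" "c \<in> V" "x \<in> V" "y \<in> V"
      using assms(1,4,5) that by auto
    show ?thesis
    proof (rule reflect_through_image_eq)
      fix p assume "p \<in> rel_bdry_cap c r \<alpha> x \<epsilon> \<inter> V"
      then show "?T p \<in> rel_bdry_cap c r \<alpha> y \<epsilon> \<inter> V"
        using reflect_through_mem_rel_bdry_cap[OF assms(2-5)] reflect_through_mem_hyperplane[OF V]
        by blast
    next
      fix p assume "p \<in> rel_bdry_cap c r \<alpha> y \<epsilon> \<inter> V"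
      then show "reflect_through c (y - x) p \<in> rel_bdry_cap c r \<alpha> x \<epsilon> \<inter> V"
        using reflect_through_mem_rel_bdry_cap[OF assms(3,2,5,4)]
          reflect_through_mem_hyperplane[OF V(1,2,4,3)]
        by blast
    qed
  qed
  show ?thesis
    unfolding isometric_strat_def
    by (rule exI[of _ id], rule exI[of _ ?T])
      (simp add: orthogonal_affine_reflect_through cap_image slice_image)
qed

theorem lemma5p2:
  fixes c :: "'a::euclidean_space" and r :: real and \<V> :: "'a set set"
    and x y :: 'a and \<epsilon> :: real
  assumes "r > 0"
    and "finite \<V>"
    and "\<forall>V \<in> \<V>. affine_hyperplane V \<and> c \<in> V"
    and "x \<in> sphere c r" and "y \<in> sphere c r"
    and "hyps_at \<V> x = hyps_at \<V> y"
    and "y \<in> stratum (sphere c r) \<V> x"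
    and "\<epsilon> > 0"
  shows "isometric_strat
           (rel_bdry_cap c r (hyps_at \<V> x) x \<epsilon>) (hyps_at \<V> x)
           (rel_bdry_cap c r (hyps_at \<V> x) y \<epsilon>) (hyps_at \<V> y)"
proof -
  have hyps: "\<forall>V \<in> hyps_at \<V> x. affine_hyperplane V \<and> c \<in> V"
    using assms(3) by (simp add: hyps_at_def)
  have x: "x \<in> \<Inter>(hyps_at \<V> x)"
    by (auto simp: hyps_at_def)
  have y: "y \<in> \<Inter>(hyps_at \<V> x)"
    using assms(7) by (simp add: stratum_def strat_piece_def)
  show ?thesis
    unfolding assms(6)[symmetric] by (rule isometric_strat_rel_bdry_cap[OF hyps assms(4,5) x y])
qed

end
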